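(* For every $m\ge 0$, $$(1-x)a_{m+1}(x)=-2(1+x)(mx-2m+x-1)a_m(x)-2x(1+x)^2a_m'(x)+x(4mx-x-3)b_m(x)-4x^2(1+x)b_m'(x),$$ $$(x-1)b_{m+1}(x)=(4mx+x-1)a_m(x)-4x(1+x)a_m'(x)+(6mx-4m+x-3)(x+1)b_m(x)-2x(1+x)^2b_m'(x).$$
   Context: $P_m(x)=\sum_{i=0}^m d_i(m)x^i$ with $d_i(m)=2^{-2m}\sum_{k=i}^m 2^k\binom{2m-2k}{m-k}\binom{m+k}{k}\binom{k}{i}$; $Q_m(x)=2^m m!\,x^mP_m(1/x)$ (degree $m$). $(a_m(x),b_m(x))$ is the symmetric decomposition of $Q_m$: $a_m(x)=\frac{Q_m(x)-x^{m+1}Q_m(1/x)}{1-x}$, $b_m(x)=\frac{x^mQ_m(1/x)-Q_m(x)}{1-x}$, so $Q_m(x)=a_m(x)+xb_m(x)$. *)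

theory Defs
  imports "HOL-Computational_Algebra.Polynomial"
begin

definition dcoef :: "nat \<Rightarrow> nat \<Rightarrow> real" where
  "dcoef i m = (\<Sum>k=i..m. 2^k * real ((2*m - 2*k) choose (m - k))
                 * real ((m + k) choose k) * real (k choose i)) / 4^m"

definition Ppoly :: "nat \<Rightarrow> real poly" where
  "Ppoly m = (\<Sum>i\<le>m. monom (dcoef i m) i)"

text \<open>Q_m(x) = 2^m m! x^m P_m(1/x) = sum_i 2^m m! d_i(m) x^(m-i)\<close>
definition Qpoly :: "nat \<Rightarrow> real poly" where
  "Qpoly m = smult (2^m * fact m) (\<Sum>i\<le>m. monom (dcoef i m) (m - i))"

text \<open>x^m Q_m(1/x) = 2^m m! P_m(x)\<close>
definition Qrev :: "nat \<Rightarrow> real poly" where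
  "Qrev m = smult (2^m * fact m) (Ppoly m)"

text \<open>a_m = (Q_m(x) - x^(m+1) Q_m(1/x)) / (1-x)\<close>
definition apoly :: "nat \<Rightarrow> real poly" where
  "apoly m = (Qpoly m - pCons 0 (Qrev m)) div [:1, -1:]"

definition bpoly :: "nat \<Rightarrow> real poly" where
  "bpoly m = (Qrev m - Qpoly m) div [:1, -1:]"

end

theory Submission
  imports Defs
begin

text \<open>
  Write \<open>Q\<^sub>m(x) = H\<^sub>m(x, 1 + x)\<close> and \<open>x\<^sup>m Q\<^sub>m(1/x) = H\<^sub>m(1, 1 + x)\<close> for the
  homogeneous polynomial \<open>H\<^sub>m(u, v) = \<Sum>\<^sub>k c\<^sub>m\<^sub>,\<^sub>k u\<^bsup>m-k\<^esup> v\<^sup>k\<close>. A two-term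
  recurrence of the coefficients turns into
  \<open>H\<^sub>m\<^sub>+\<^sub>1 = ((2m+1)u + (2m+2)v) H\<^sub>m + 2(v - u) v \<partial>\<^sub>vH\<^sub>m\<close>, and Euler's relation
  expresses \<open>v \<partial>\<^sub>vH\<^sub>m\<close> through the derivative in \<open>x\<close>. This gives first-order
  differential recurrences for \<open>Q\<^sub>m\<close> and its reversal. As \<open>(1 - x) a\<^sub>m\<close> and
  \<open>(1 - x) b\<^sub>m\<close> are linear combinations of the two, the claimed recurrences hold after
  multiplication by \<open>(1 - x)\<^sup>2\<close>, which cancels in the polynomial ring.
\<close>

lemma binomial_sum_atMost:
  fixes x y :: "'a :: comm_semiring_1"
  assumes "k \<le> m"
  shows "(\<Sum>i\<le>m. of_nat (k choose i) * x ^ i * y ^ (m - i)) = (x + y) ^ k * y ^ (m - k)"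
proof -
  have "(\<Sum>i\<le>m. of_nat (k choose i) * x ^ i * y ^ (m - i)) = (\<Sum>i\<le>k. of_nat (k choose i) * x ^ i * y ^ (m - i))"
    using assms by (intro sum.mono_neutral_right) (auto simp: binomial_eq_0 not_le)
  also have "\<dots> = (\<Sum>i\<le>k. of_nat (k choose i) * x ^ i * y ^ (k - i)) * y ^ (m - k)"
    using assms by (simp add: sum_distrib_right mult.assoc flip: power_add)
  finally show ?thesis by (simp add: binomial_ring)
qed

lemma pderiv_sum: "pderiv (sum f A) = (\<Sum>x\<in>A. pderiv (f x))"
  using higher_pderiv_sum[of 1 f A] by simp

lemma mult_pderiv_power: "p * pderiv (p ^ n) = of_nat n * pderiv p * p ^ n"
  by (cases n) (simp, simp only: pderiv_power_Suc, simp add: of_nat_mult_conv_smult mult_ac del: of_nat_Suc)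

lemma pderiv_power_mult_power:
  "u * v * pderiv (u ^ i * v ^ j) = (of_nat i * pderiv u * v + of_nat j * u * pderiv v) * (u ^ i * v ^ j)"
proof -
  have "u * v * pderiv (u ^ i * v ^ j) = u ^ i * u * (v * pderiv (v ^ j)) + v ^ j * v * (u * pderiv (u ^ i))"
    by (simp add: pderiv_mult algebra_simps)
  then show ?thesis by (simp add: mult_pderiv_power algebra_simps)
qed

lemma mult_div_one_minus_X:
  fixes p :: "'a :: field poly"
  assumes "poly p 1 = 0"
  shows "(1 - [:0, 1:]) * (p div [:1, -1:]) = p"
proof -
  have "- [:1, -1:] dvd p" using assms by (simp add: poly_eq_0_iff_dvd)
  then have "[:1, -1:] dvd p" by (simp only: minus_dvd_iff)
  moreover have "[:1, -1:] = 1 - [:0, 1 :: 'a:]" by (simp add: one_pCons)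
  ultimately show ?thesis by simp
qed

text \<open>For \<open>k \<le> m\<close> this equals \<open>2\<^sup>m m! 2\<^sup>k C(2m-2k, m-k) C(m+k, k) / 4\<^sup>m\<close>, the coefficient
  of \<open>(1 + x)\<^sup>k\<close> in \<open>2\<^sup>m m! P\<^sub>m(x)\<close>; it vanishes for \<open>k > m\<close> so that the recurrence
  below needs no boundary case at the top.\<close>
definition qcoef :: "nat \<Rightarrow> nat \<Rightarrow> real" where
  "qcoef m k = (if k \<le> m then fact (2 * (m - k)) * fact (m + k) / (2 ^ (m - k) * fact (m - k) ^ 2 * fact k) else 0)"

lemma qcoef_Suc_0: "qcoef (Suc m) 0 = (2 * real m + 1) * qcoef m 0"
  by (simp add: qcoef_def divide_simps power2_eq_square)

lemma qcoef_Suc_Suc: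
  assumes "k \<le> m"
  shows "qcoef (Suc m) (Suc k) = (2 * real m - 2 * real k - 1) * qcoef m (Suc k) + 2 * (real m + real k + 1) * qcoef m k"
proof -
  obtain j where m: "m = j + k" using assms le_iff_add by (metis add.commute)
  show ?thesis
  proof (cases j)
    case 0
    then show ?thesis by (simp add: m qcoef_def divide_simps) (simp add: algebra_simps)
  next
    case (Suc i)
    have "2 * (m - k) = Suc (Suc (2 * i))" "m + k = Suc (i + 2 * k)" using m Suc by simp_all
    then show ?thesis by (simp add: m Suc qcoef_def divide_simps power2_eq_square) (simp add: algebra_simps)
  qed
qed

lemma qcoef_sum_Suc:
  fixes a b :: real
  shows "(\<Sum>k\<le>Suc m. qcoef (Suc m) k * a ^ (Suc m - k) * b ^ k)
       = ((2 * real m + 1) * a + (2 * real m + 2) * b) * (\<Sum>k\<le>m. qcoef m k * a ^ (m - k) * b ^ k)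
         + 2 * (b - a) * (\<Sum>k\<le>m. real k * qcoef m k * a ^ (m - k) * b ^ k)"
proof -
  define c where "c k = (2 * real m + 1 - 2 * real k) * qcoef m k" for k
  have "(\<Sum>k\<le>Suc m. qcoef (Suc m) k * a ^ (Suc m - k) * b ^ k)
      = c 0 * a ^ Suc m + (\<Sum>k\<le>m. c (Suc k) * a ^ (m - k) * b ^ Suc k)
        + (\<Sum>k\<le>m. 2 * (real m + real k + 1) * qcoef m k * a ^ (m - k) * b ^ Suc k)"
  proof -
    have "qcoef (Suc m) (Suc k) * a ^ (m - k) * b ^ Suc k
        = c (Suc k) * a ^ (m - k) * b ^ Suc k + 2 * (real m + real k + 1) * qcoef m k * a ^ (m - k) * b ^ Suc k"
      if "k \<le> m" for k
      using that by (simp add: qcoef_Suc_Suc c_def algebra_simps)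
    then show ?thesis
      by (simp add: sum.atMost_Suc_shift qcoef_Suc_0 c_def sum.distrib del: sum.atMost_Suc)
  qed
  also have "c 0 * a ^ Suc m + (\<Sum>k\<le>m. c (Suc k) * a ^ (m - k) * b ^ Suc k)
      = (\<Sum>k\<le>Suc m. c k * a ^ (Suc m - k) * b ^ k)"
    by (simp add: sum.atMost_Suc_shift del: sum.atMost_Suc)
  also have "\<dots> = a * (\<Sum>k\<le>m. c k * a ^ (m - k) * b ^ k)"
    by (simp add: c_def qcoef_def sum_distrib_left Suc_diff_le mult_ac)
  also have "a * (\<Sum>k\<le>m. c k * a ^ (m - k) * b ^ k)
      + (\<Sum>k\<le>m. 2 * (real m + real k + 1) * qcoef m k * a ^ (m - k) * b ^ Suc k)
      = (\<Sum>k\<le>m. ((2 * real m + 1) * a + (2 * real m + 2) * b) * (qcoef m k * a ^ (m - k) * b ^ k)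
                 + 2 * (b - a) * (real k * qcoef m k * a ^ (m - k) * b ^ k))"
    unfolding sum_distrib_left sum.distrib[symmetric] by (intro sum.cong) (simp_all add: c_def algebra_simps)
  finally show ?thesis
    by (simp add: sum.distrib sum_distrib_left)
qed

lemma scaled_dcoef: "2 ^ m * fact m * dcoef i m = (\<Sum>k\<le>m. qcoef m k * real (k choose i))"
proof -
  have summand: "2 ^ m * fact m * (2 ^ k * real ((2*m - 2*k) choose (m - k)) * real ((m + k) choose k)) / 4 ^ m
      = qcoef m k" if "k \<le> m" for k
  proof -
    have "2 * m - 2 * k = (m - k) + (m - k)" using that by simp
    then have "real ((2*m - 2*k) choose (m - k)) = fact (2 * (m - k)) / (fact (m - k) * fact (m - k))"
      using binomial_fact[of "m - k" "2 * (m - k)"] by (simp add: mult_2)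
    moreover have "real ((m + k) choose k) = fact (m + k) / (fact k * fact m)"
      using binomial_fact[of k "m + k"] by simp
    moreover have "(4::real) ^ m = 2 ^ (m - k) * 2 ^ k * 2 ^ m"
    proof -
      have "(4::real) ^ m = 2 ^ m * 2 ^ m" by (simp flip: power_mult_distrib)
      then show ?thesis using that by (simp flip: power_add)
    qed
    ultimately show ?thesis using that by (simp add: qcoef_def power2_eq_square)
  qed
  have "2 ^ m * fact m * dcoef i m = (\<Sum>k=i..m. qcoef m k * real (k choose i))"
    unfolding dcoef_def sum_distrib_left sum_divide_distrib sum_distrib_right
    by (intro sum.cong) (auto simp flip: summand)
  also have "\<dots> = (\<Sum>k\<le>m. qcoef m k * real (k choose i))"
    by (rule sum.mono_neutral_left) auto
  finally show ?thesis .
qed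

definition qhom :: "nat \<Rightarrow> real poly \<Rightarrow> real poly \<Rightarrow> real poly" where
  "qhom m u v = (\<Sum>k\<le>m. smult (qcoef m k) (u ^ (m - k) * v ^ k))"

text \<open>\<open>v \<partial>\<^sub>v\<close> applied to \<open>qhom m u v\<close>.\<close>
definition qhom_vweight :: "nat \<Rightarrow> real poly \<Rightarrow> real poly \<Rightarrow> real poly" where
  "qhom_vweight m u v = (\<Sum>k\<le>m. smult (real k * qcoef m k) (u ^ (m - k) * v ^ k))"

lemma poly_qhom: "poly (qhom m u v) x = (\<Sum>k\<le>m. qcoef m k * poly u x ^ (m - k) * poly v x ^ k)"
  by (simp add: qhom_def poly_sum mult.assoc)

lemma poly_qhom_vweight:
  "poly (qhom_vweight m u v) x = (\<Sum>k\<le>m. real k * qcoef m k * poly u x ^ (m - k) * poly v x ^ k)"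
  by (simp add: qhom_vweight_def poly_sum mult.assoc)

lemma qhom_Suc:
  "qhom (Suc m) u v = ((2 * of_nat m + 1) * u + (2 * of_nat m + 2) * v) * qhom m u v
                      + 2 * (v - u) * qhom_vweight m u v"
  by (rule poly_ext) (simp add: poly_qhom poly_qhom_vweight qcoef_sum_Suc del: sum.atMost_Suc)

lemma qhom_pderiv:
  "u * v * pderiv (qhom m u v)
     = of_nat m * pderiv u * v * qhom m u v + (u * pderiv v - pderiv u * v) * qhom_vweight m u v"
proof -
  have "u * v * pderiv (qhom m u v)
      = (\<Sum>k\<le>m. smult (qcoef m k) ((of_nat (m - k) * pderiv u * v + of_nat k * u * pderiv v) * (u ^ (m - k) * v ^ k)))"
    by (simp add: qhom_def pderiv_sum pderiv_smult sum_distrib_left pderiv_power_mult_power flip: mult.assoc)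
  also have "\<dots> = (\<Sum>k\<le>m. of_nat m * pderiv u * v * smult (qcoef m k) (u ^ (m - k) * v ^ k)
                   + (u * pderiv v - pderiv u * v) * smult (real k * qcoef m k) (u ^ (m - k) * v ^ k))"
    by (intro sum.cong refl poly_ext) (simp add: of_nat_diff algebra_simps)
  finally show ?thesis
    by (simp add: qhom_def qhom_vweight_def sum.distrib sum_distrib_left)
qed

lemma Qrev_eq_qhom: "Qrev m = qhom m 1 [:1, 1:]"
proof (rule poly_ext)
  fix x :: real
  have "poly (Qrev m) x = (\<Sum>i\<le>m. 2 ^ m * fact m * dcoef i m * x ^ i)"
    by (simp add: Qrev_def Ppoly_def poly_sum poly_monom sum_distrib_left mult.assoc)
  also have "\<dots> = (\<Sum>k\<le>m. qcoef m k * (\<Sum>i\<le>m. real (k choose i) * x ^ i))"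
    unfolding scaled_dcoef sum_distrib_right sum_distrib_left power_one mult_1_right
    by (subst sum.swap) (simp add: mult.assoc)
  also have "\<dots> = poly (qhom m 1 [:1, 1:]) x"
    using binomial_sum_atMost[of _ m x 1] by (simp add: poly_qhom add.commute)
  finally show "poly (Qrev m) x = poly (qhom m 1 [:1, 1:]) x" .
qed

lemma Qpoly_eq_qhom: "Qpoly m = qhom m [:0, 1:] [:1, 1:]"
proof (rule poly_ext)
  fix x :: real
  have "poly (Qpoly m) x = (\<Sum>i\<le>m. 2 ^ m * fact m * dcoef i m * x ^ (m - i))"
    by (simp add: Qpoly_def poly_sum poly_monom sum_distrib_left mult.assoc)
  also have "\<dots> = (\<Sum>k\<le>m. qcoef m k * (\<Sum>i\<le>m. real (k choose i) * x ^ (m - i)))"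
    unfolding scaled_dcoef sum_distrib_right sum_distrib_left power_one mult_1_right
    by (subst sum.swap) (simp add: mult.assoc)
  also have "\<dots> = poly (qhom m [:0, 1:] [:1, 1:]) x"
    using binomial_sum_atMost[of _ m 1 x] by (simp add: poly_qhom mult_ac)
  finally show "poly (Qpoly m) x = poly (qhom m [:0, 1:] [:1, 1:]) x" .
qed

lemma Qpoly_Suc:
  "Qpoly (Suc m) = ((6 * of_nat m + 3) * [:0, 1:] + 4 * of_nat m + 2) * Qpoly m
                   - 2 * [:0, 1:] * (1 + [:0, 1:]) * pderiv (Qpoly m)"
proof -
  define X :: "real poly" where "X = [:0, 1:]"
  have V: "[:1, 1:] = 1 + X" and dX: "pderiv X = 1" by (simp_all add: X_def pderiv_pCons one_pCons)
  note rec = qhom_Suc[of m X "1 + X"] and der = qhom_pderiv[of X "1 + X" m]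
  have "Qpoly (Suc m) = ((6 * of_nat m + 3) * X + 4 * of_nat m + 2) * Qpoly m - 2 * X * (1 + X) * pderiv (Qpoly m)"
    using rec der unfolding Qpoly_eq_qhom V X_def[symmetric] by (simp add: dX pderiv_add) algebra
  then show ?thesis by (simp add: X_def)
qed

lemma Qrev_Suc:
  "Qrev (Suc m) = (4 * of_nat m + 3 + 2 * (of_nat m + 1) * [:0, 1:]) * Qrev m
                  + 2 * [:0, 1:] * (1 + [:0, 1:]) * pderiv (Qrev m)"
proof -
  define X :: "real poly" where "X = [:0, 1:]"
  have V: "[:1, 1:] = 1 + X" and dX: "pderiv X = 1" by (simp_all add: X_def pderiv_pCons one_pCons)
  note rec = qhom_Suc[of m 1 "1 + X"] and der = qhom_pderiv[of 1 "1 + X" m]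
  have "Qrev (Suc m) = (4 * of_nat m + 3 + 2 * (of_nat m + 1) * X) * Qrev m + 2 * X * (1 + X) * pderiv (Qrev m)"
    using rec der unfolding Qrev_eq_qhom V by (simp add: dX pderiv_add) algebra
  then show ?thesis by (simp add: X_def)
qed

lemma poly_Qpoly_eq_Qrev_at_1: "poly (Qpoly m) 1 = poly (Qrev m) 1"
  by (simp add: Qpoly_eq_qhom Qrev_eq_qhom poly_qhom)

lemma apoly_decomposition: "(1 - [:0, 1:]) * apoly m = Qpoly m - [:0, 1:] * Qrev m"
  using mult_div_one_minus_X[of "Qpoly m - pCons 0 (Qrev m)"]
  by (simp add: apoly_def poly_Qpoly_eq_Qrev_at_1)

lemma bpoly_decomposition: "(1 - [:0, 1:]) * bpoly m = Qrev m - Qpoly m"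
  unfolding bpoly_def by (rule mult_div_one_minus_X) (simp add: poly_Qpoly_eq_Qrev_at_1)

lemma symmetric_decomposition_step:
  fixes x M A B A' B' A1 B1 Q R Q' R' Q1 R1 :: "'a :: idom"
  assumes "x \<noteq> 1"
    and A: "(1 - x) * A = Q - x * R" and B: "(1 - x) * B = R - Q"
    and A': "(1 - x) * A' - A = Q' - R - x * R'" and B': "(1 - x) * B' - B = R' - Q'"
    and A1: "(1 - x) * A1 = Q1 - x * R1" and B1: "(1 - x) * B1 = R1 - Q1"
    and Q1: "Q1 = ((6 * M + 3) * x + 4 * M + 2) * Q - 2 * x * (1 + x) * Q'"
    and R1: "R1 = (4 * M + 3 + 2 * (M + 1) * x) * R + 2 * x * (1 + x) * R'"
  shows "(1 - x) * A1 = - 2 * (1 + x) * (M * x - 2 * M + x - 1) * A - 2 * x * (1 + x)^2 * A'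
                        + x * (4 * M * x - x - 3) * B - 4 * x^2 * (1 + x) * B'" (is "_ = ?RA")
    and "(x - 1) * B1 = (4 * M * x + x - 1) * A - 4 * x * (1 + x) * A'
                        + (6 * M * x - 4 * M + x - 3) * (x + 1) * B - 2 * x * (1 + x)^2 * B'" (is "_ = ?RB")
proof -
  have sA: "(1 - x)^2 * A = (1 - x) * (Q - x * R)"
    using A by (simp add: power2_eq_square mult.assoc)
  have sB: "(1 - x)^2 * B = (1 - x) * (R - Q)"
    using B by (simp add: power2_eq_square mult.assoc)
  have sA': "(1 - x)^2 * A' = (Q - x * R) + (1 - x) * (Q' - R - x * R')"
    using A A' by algebra
  have sB': "(1 - x)^2 * B' = (R - Q) + (1 - x) * (R' - Q')"
    using B B' by algebra
  have "(1 - x)^2 * ((1 - x) * A1) = (1 - x)^2 * (Q1 - x * R1)"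
    by (simp only: A1)
  also have "\<dots> = - 2 * (1 + x) * (M * x - 2 * M + x - 1) * ((1 - x)^2 * A)
        - 2 * x * (1 + x)^2 * ((1 - x)^2 * A')
        + x * (4 * M * x - x - 3) * ((1 - x)^2 * B) - 4 * x^2 * (1 + x) * ((1 - x)^2 * B')"
    unfolding sA sB sA' sB' Q1 R1 by algebra
  also have "\<dots> = (1 - x)^2 * ?RA"
    by (simp add: algebra_simps)
  finally have a: "(1 - x)^2 * ((1 - x) * A1) = (1 - x)^2 * ?RA" .
  have "(x - 1) * B1 = Q1 - R1"
    using B1 by (simp add: algebra_simps)
  then have "(1 - x)^2 * ((x - 1) * B1) = (1 - x)^2 * (Q1 - R1)"
    by (simp only:)
  also have "\<dots> = (4 * M * x + x - 1) * ((1 - x)^2 * A) - 4 * x * (1 + x) * ((1 - x)^2 * A')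
        + (6 * M * x - 4 * M + x - 3) * (x + 1) * ((1 - x)^2 * B) - 2 * x * (1 + x)^2 * ((1 - x)^2 * B')"
    unfolding sA sB sA' sB' Q1 R1 by algebra
  also have "\<dots> = (1 - x)^2 * ?RB"
    by (simp add: algebra_simps)
  finally have b: "(1 - x)^2 * ((x - 1) * B1) = (1 - x)^2 * ?RB" .
  have "(1 - x)^2 \<noteq> 0" using assms(1) by simp
  with a b show "(1 - x) * A1 = ?RA" and "(x - 1) * B1 = ?RB"
    by simp_all
qed

theorem lemma3p1:
  fixes m :: nat and x :: real
  shows "(1 - x) * poly (apoly (Suc m)) x =
           - 2 * (1 + x) * (real m * x - 2 * real m + x - 1) * poly (apoly m) x
           - 2 * x * (1 + x)^2 * poly (pderiv (apoly m)) x
           + x * (4 * real m * x - x - 3) * poly (bpoly m) x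
           - 4 * x^2 * (1 + x) * poly (pderiv (bpoly m)) x
       \<and> (x - 1) * poly (bpoly (Suc m)) x =
           (4 * real m * x + x - 1) * poly (apoly m) x
           - 4 * x * (1 + x) * poly (pderiv (apoly m)) x
           + (6 * real m * x - 4 * real m + x - 3) * (x + 1) * poly (bpoly m) x
           - 2 * x * (1 + x)^2 * poly (pderiv (bpoly m)) x"
proof -
  define X :: "real poly" where "X = [:0, 1:]"
  have dX: "pderiv X = 1" by (simp add: X_def pderiv_pCons)
  have a: "(1 - X) * apoly k = Qpoly k - X * Qrev k" and b: "(1 - X) * bpoly k = Qrev k - Qpoly k" for k
    unfolding X_def by (fact apoly_decomposition bpoly_decomposition)+
  have a': "(1 - X) * pderiv (apoly m) - apoly m = pderiv (Qpoly m) - Qrev m - X * pderiv (Qrev m)"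
    using arg_cong[OF a[of m], of pderiv] by (simp add: pderiv_mult pderiv_diff dX algebra_simps)
  have b': "(1 - X) * pderiv (bpoly m) - bpoly m = pderiv (Qrev m) - pderiv (Qpoly m)"
    using arg_cong[OF b[of m], of pderiv] by (simp add: pderiv_mult pderiv_diff dX algebra_simps)
  have "X \<noteq> 1" by (simp add: X_def one_pCons)
  note step = symmetric_decomposition_step[OF this a b a' b' a b Qpoly_Suc[folded X_def] Qrev_Suc[folded X_def]]
  show ?thesis
    using arg_cong[OF step(1), of "\<lambda>p. poly p x"] arg_cong[OF step(2), of "\<lambda>p. poly p x"]
    by (simp add: X_def) (simp add: algebra_simps)
qed

end
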